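(* Let $A[0\ldots n-1]$, $B[0\ldots m-1]$ be sequences over a totally ordered alphabet, let $V=\{(i,j)\mid A[i]=B[j]\}$ and $E=\{(u,v)\mid u=(i,j),\,v=(i',j')\in V,\ i<i',\ j<j',\ A[i]<A[i']\}$. In the forward pass of the sparse-DAG algorithm described in the context, immediately after the update of a vertex $v$ one has $INC[v]=1+\max_{(u,v)\in E}INC[u]$ (the maximum over an empty set being $0$). Analogously, in the backward pass, immediately after the update of $v=(i,j)$ one has $DEC[v]=1+\max DEC[w]$, the maximum taken over all $w=(i',j')\in V$ with $i<i'$, $j<j'$ and $A[i']<A[i]$ (empty maximum $0$).
   Context: Sparse-DAG algorithm: list all pairs $(i,j)\in V$ and sort them lexicographically by $(i$ ascending, $j$ ascending$)$. For each vertex $v=(i,j)$ let $r_J(v)$ be $1$ plus the rank of $j$ among the distinct column indices occurring in $V$, and $r_V(v)$ the rank (starting at $1$) of the value $A[i]$ among the sorted distinct values of $A\cup B$; let $MAX_J=\max_v r_J(v)$. A 2-D range structure stores points with integer keys $(x,y)$ and values, supports $\textsc{Query}(a,b)$ returning the maximum value over stored points with $x\le a$ and $y\le b$ (or $0$ if none), and $\textsc{Update}((x,y),val)$ inserting a point. Forward pass: starting from an empty structure, for each vertex $v$ in sorted order set $INC[v]\gets\textsc{Query}(r_J(v)-1,r_V(v)-1)+1$ and then $\textsc{Update}((r_J(v),r_V(v)),INC[v])$. Backward pass: starting from a new empty structure, for each vertex $v$ in reverse sorted order let $\widehat r_J(v)=MAX_J-r_J(v)+1$, set $DEC[v]\gets\textsc{Query}(\widehat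 r_J(v)-1,r_V(v)-1)+1$ and then $\textsc{Update}((\widehat r_J(v),r_V(v)),DEC[v])$. *)

theory Defs
  imports Main
begin

definition Vset :: "'a list \<Rightarrow> 'a list \<Rightarrow> (nat \<times> nat) set" where
  "Vset A B = {(i,j). i < length A \<and> j < length B \<and> A ! i = B ! j}"

definition Eset :: "('a::linorder) list \<Rightarrow> 'a list \<Rightarrow> ((nat \<times> nat) \<times> (nat \<times> nat)) set" where
  "Eset A B = {(u,v). u \<in> Vset A B \<and> v \<in> Vset A B \<and> fst u < fst v \<and> snd u < snd v
                      \<and> A ! fst u < A ! fst v}"

definition vlist :: "'a list \<Rightarrow> 'a list \<Rightarrow> (nat \<times> nat) list" where
  "vlist A B = concat (map (\<lambda>i. map (\<lambda>j. (i,j)) (filter (\<lambda>j. A ! i = B ! j) [0..<length B]))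
                           [0..<length A])"

definition cols :: "'a list \<Rightarrow> 'a list \<Rightarrow> nat set" where
  "cols A B = snd ` Vset A B"

definition rJ :: "'a list \<Rightarrow> 'a list \<Rightarrow> nat \<times> nat \<Rightarrow> nat" where
  "rJ A B v = 1 + card {j \<in> cols A B. j \<le> snd v}"

definition rV :: "('a::linorder) list \<Rightarrow> 'a list \<Rightarrow> nat \<times> nat \<Rightarrow> nat" where
  "rV A B v = card {x \<in> set A \<union> set B. x \<le> A ! fst v}"

definition maxJ :: "'a list \<Rightarrow> 'a list \<Rightarrow> nat" where
  "maxJ A B = Max (insert 0 (rJ A B ` Vset A B))"

(* 2-D range structure: a list of stored points ((x,y), value). *)
type_synonym rstruct = "((nat \<times> nat) \<times> nat) list"

definition rquery :: "rstruct \<Rightarrow> nat \<Rightarrow> nat \<Rightarrow> nat" where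
  "rquery S a b = Max (insert 0 {val. \<exists>x y. ((x,y),val) \<in> set S \<and> x \<le> a \<and> y \<le> b})"

definition rupdate :: "rstruct \<Rightarrow> nat \<times> nat \<Rightarrow> nat \<Rightarrow> rstruct" where
  "rupdate S p val = (p, val) # S"

definition fwd_step :: "('a::linorder) list \<Rightarrow> 'a list \<Rightarrow> rstruct \<times> (nat \<times> nat \<Rightarrow> nat)
    \<Rightarrow> nat \<times> nat \<Rightarrow> rstruct \<times> (nat \<times> nat \<Rightarrow> nat)" where
  "fwd_step A B st v =
     (let S = fst st; INC = snd st;
          val = rquery S (rJ A B v - 1) (rV A B v - 1) + 1
      in (rupdate S (rJ A B v, rV A B v) val, INC(v := val)))"

definition fwd_state :: "('a::linorder) list \<Rightarrow> 'a list \<Rightarrow> nat \<Rightarrow> rstruct \<times> (nat \<times> nat \<Rightarrow> nat)" where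
  "fwd_state A B k = foldl (fwd_step A B) ([], \<lambda>_. 0) (take k (vlist A B))"

definition bwd_step :: "('a::linorder) list \<Rightarrow> 'a list \<Rightarrow> rstruct \<times> (nat \<times> nat \<Rightarrow> nat)
    \<Rightarrow> nat \<times> nat \<Rightarrow> rstruct \<times> (nat \<times> nat \<Rightarrow> nat)" where
  "bwd_step A B st v =
     (let S = fst st; DEC = snd st;
          hrJ = maxJ A B - rJ A B v + 1;
          val = rquery S (hrJ - 1) (rV A B v - 1) + 1
      in (rupdate S (hrJ, rV A B v) val, DEC(v := val)))"

definition bwd_state :: "('a::linorder) list \<Rightarrow> 'a list \<Rightarrow> nat \<Rightarrow> rstruct \<times> (nat \<times> nat \<Rightarrow> nat)" where
  "bwd_state A B k = foldl (bwd_step A B) ([], \<lambda>_. 0) (take k (rev (vlist A B)))"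

end

(* Both passes are one sweep: vertices are processed in a fixed order, and the value given to v
   is 1 plus the maximum value of the already processed vertices whose keys are strictly
   dominated by the key of v in both coordinates. The ranks rJ and rV are order embeddings of
   the columns and of the letters, so strict dominance of (rJ, rV) means j < j' and A[i] < A[i'].
   In the lexicographic order every vertex with a smaller row comes first, and among the earlier
   vertices a larger letter excludes an equal row; hence the dominated earlier vertices are
   exactly the predecessors of v in E. The backward pass is the same sweep over the reversed
   order, with the column rank reflected by maxJ. *)
theory Submission
  imports Defs "HOL-Library.Product_Lexorder"
begin

definition sweep_step :: "(nat \<times> nat \<Rightarrow> nat \<times> nat) \<Rightarrow> rstruct \<times> (nat \<times> nat \<Rightarrow> nat)
    \<Rightarrow> nat \<times> nat \<Rightarrow> rstruct \<times> (nat \<times> nat \<Rightarrow> nat)" where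
  "sweep_step key st v =
     (let val = rquery (fst st) (fst (key v) - 1) (snd (key v) - 1) + 1
      in (rupdate (fst st) (key v) val, (snd st)(v := val)))"

definition sweep :: "(nat \<times> nat \<Rightarrow> nat \<times> nat) \<Rightarrow> (nat \<times> nat) list
    \<Rightarrow> rstruct \<times> (nat \<times> nat \<Rightarrow> nat)" where
  "sweep key vs = foldl (sweep_step key) ([], \<lambda>_. 0) vs"

lemma sweep_Nil [simp]: "sweep key [] = ([], \<lambda>_. 0)"
  by (simp add: sweep_def)

lemma sweep_snoc:
  "sweep key (vs @ [v]) =
     (let val = rquery (fst (sweep key vs)) (fst (key v) - 1) (snd (key v) - 1) + 1
      in ((key v, val) # fst (sweep key vs), (snd (sweep key vs))(v := val)))"
  by (simp add: sweep_def sweep_step_def rupdate_def)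

lemma set_fst_sweep:
  "distinct vs \<Longrightarrow> set (fst (sweep key vs)) = (\<lambda>u. (key u, snd (sweep key vs) u)) ` set vs"
  by (induction vs rule: rev_induct) (auto simp: sweep_snoc Let_def)

lemma rquery_sweep:
  assumes "distinct vs"
  shows "rquery (fst (sweep key vs)) a b =
    Max (insert 0 {snd (sweep key vs) u | u. u \<in> set vs \<and> fst (key u) \<le> a \<and> snd (key u) \<le> b})"
proof -
  have "{val. \<exists>x y. ((x, y), val) \<in> set (fst (sweep key vs)) \<and> x \<le> a \<and> y \<le> b}
      = {snd (sweep key vs) u | u. u \<in> set vs \<and> fst (key u) \<le> a \<and> snd (key u) \<le> b}"
    unfolding set_fst_sweep[OF assms]
    by (auto simp: image_iff) (metis fst_conv snd_conv, metis prod.collapse)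
  then show ?thesis by (simp add: rquery_def)
qed

text \<open>Positivity of the key of v is needed since the query bounds are the truncated
  differences \<open>key v - 1\<close>.\<close>
lemma sweep_snoc_value:
  assumes "distinct (vs @ [v])" "0 < fst (key v)" "0 < snd (key v)"
  shows "snd (sweep key (vs @ [v])) v = 1 + Max (insert 0
    {snd (sweep key (vs @ [v])) u | u. u \<in> set vs \<and> fst (key u) < fst (key v) \<and> snd (key u) < snd (key v)})"
proof -
  have "v \<notin> set vs" using assms(1) by simp
  then have "{snd (sweep key (vs @ [v])) u | u. u \<in> set vs \<and> fst (key u) < fst (key v) \<and> snd (key u) < snd (key v)}
      = {snd (sweep key vs) u | u. u \<in> set vs \<and> fst (key u) \<le> fst (key v) - 1 \<and> snd (key u) \<le> snd (key v) - 1}"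
    using assms(2,3) by (force simp: sweep_snoc Let_def)
  with assms(1) show ?thesis by (simp add: sweep_snoc Let_def rquery_sweep)
qed

lemma set_take_iff_sorted_wrt:
  assumes sorted: "sorted_wrt R xs" and "asymp R" and k: "k < length xs" and "u \<in> set xs"
  shows "u \<in> set (take k xs) \<longleftrightarrow> R u (xs ! k)"
proof
  assume "u \<in> set (take k xs)"
  then obtain i where "i < k" "u = xs ! i" by (auto simp: in_set_conv_nth)
  then show "R u (xs ! k)" using sorted_wrt_nth_less[OF sorted _ k] by simp
next
  assume R: "R u (xs ! k)"
  obtain p where p: "p < length xs" "u = xs ! p" using \<open>u \<in> set xs\<close> by (auto simp: in_set_conv_nth)
  have "\<not> R (xs ! k) u" "\<not> R u u" using R \<open>asymp R\<close> by (auto dest: asympD)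
  then have "p < k" using sorted_wrt_nth_less[OF sorted _ p(1), of k] R p
    by (metis linorder_neqE_nat)
  then show "u \<in> set (take k xs)" using p by (auto simp: in_set_conv_nth)
qed

lemma card_atMost_in_less_iff:
  fixes a b :: "'b::linorder"
  assumes "finite C" "a \<in> C" "b \<in> C"
  shows "card {c \<in> C. c \<le> a} < card {c \<in> C. c \<le> b} \<longleftrightarrow> a < b"
proof
  assume "a < b"
  then have "{c \<in> C. c \<le> a} \<subset> {c \<in> C. c \<le> b}" using assms(3) by force
  then show "card {c \<in> C. c \<le> a} < card {c \<in> C. c \<le> b}"
    using assms(1) by (intro psubset_card_mono) auto
next
  assume "card {c \<in> C. c \<le> a} < card {c \<in> C. c \<le> b}"
  moreover have "b \<le> a \<Longrightarrow> card {c \<in> C. c \<le> b} \<le> card {c \<in> C. c \<le> a}"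
    using assms(1) by (intro card_mono) auto
  ultimately show "a < b" by fastforce
qed

lemma sorted_wrt_less_vlist: "sorted_wrt (<) (vlist A B)"
proof -
  have "sorted_wrt (<) (concat (map (\<lambda>i. map (Pair i) (filter (P i) [0..<m])) [0..<n]))"
    for P :: "nat \<Rightarrow> nat \<Rightarrow> bool" and m n
    by (induction n) (auto simp: sorted_wrt_append sorted_wrt_map intro: sorted_wrt_filter)
  then show ?thesis by (simp add: vlist_def)
qed

lemma distinct_vlist: "distinct (vlist A B)"
  using sorted_wrt_less_vlist strict_sorted_iff by blast

lemma set_vlist: "set (vlist A B) = Vset A B"
  by (auto simp: vlist_def Vset_def)

lemma finite_Vset: "finite (Vset A B)"
  by (rule finite_subset[of _ "{..<length A} \<times> {..<length B}"]) (auto simp: Vset_def)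

lemma rJ_less_iff:
  "u \<in> Vset A B \<Longrightarrow> v \<in> Vset A B \<Longrightarrow> rJ A B u < rJ A B v \<longleftrightarrow> snd u < snd v"
  using card_atMost_in_less_iff[of "cols A B" "snd u" "snd v"] finite_Vset[of A B]
  by (simp add: rJ_def cols_def)

lemma rV_less_iff:
  "u \<in> Vset A B \<Longrightarrow> v \<in> Vset A B \<Longrightarrow> rV A B u < rV A B v \<longleftrightarrow> A ! fst u < A ! fst v"
  unfolding rV_def by (rule card_atMost_in_less_iff) (auto simp: Vset_def)

lemma rV_pos:
  assumes "v \<in> Vset A B" shows "0 < rV A B v"
proof -
  have "A ! fst v \<in> {x \<in> set A \<union> set B. x \<le> A ! fst v}" using assms by (auto simp: Vset_def)
  then show ?thesis by (auto simp: rV_def card_gt_0_iff)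
qed

lemma rJ_le_maxJ: "v \<in> Vset A B \<Longrightarrow> rJ A B v \<le> maxJ A B"
  by (auto simp: maxJ_def finite_Vset)

lemma fwd_state_eq_sweep:
  "fwd_state A B k = sweep (\<lambda>v. (rJ A B v, rV A B v)) (take k (vlist A B))"
proof -
  have "fwd_step A B = sweep_step (\<lambda>v. (rJ A B v, rV A B v))"
    by (intro ext) (simp add: fwd_step_def sweep_step_def Let_def)
  then show ?thesis by (simp add: fwd_state_def sweep_def)
qed

lemma bwd_state_eq_sweep:
  "bwd_state A B k = sweep (\<lambda>v. (maxJ A B - rJ A B v + 1, rV A B v)) (take k (rev (vlist A B)))"
proof -
  have "bwd_step A B = sweep_step (\<lambda>v. (maxJ A B - rJ A B v + 1, rV A B v))"
    by (intro ext) (simp add: bwd_step_def sweep_step_def Let_def)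
  then show ?thesis by (simp add: bwd_state_def sweep_def)
qed

lemma fwd_state_INC:
  assumes k: "k < length (vlist A B)"
  defines "v \<equiv> vlist A B ! k" and "INC \<equiv> snd (fwd_state A B (Suc k))"
  shows "INC v = 1 + Max (insert 0 {INC u | u. (u, v) \<in> Eset A B})"
proof -
  let ?xs = "vlist A B"
  have v: "v \<in> Vset A B" using k by (simp add: v_def flip: set_vlist)
  have edge_iff: "(u, v) \<in> Eset A B \<longleftrightarrow>
      u \<in> set (take k ?xs) \<and> rJ A B u < rJ A B v \<and> rV A B u < rV A B v" for u
  proof (cases "u \<in> Vset A B")
    case True
    have "u \<in> set (take k ?xs) \<longleftrightarrow> u < v"
      unfolding v_def using k True
      by (intro set_take_iff_sorted_wrt sorted_wrt_less_vlist) (auto simp: set_vlist)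
    with True v show ?thesis by (auto simp: Eset_def rJ_less_iff rV_less_iff less_prod_def')
  qed (auto simp: Eset_def set_vlist dest: in_set_takeD)
  have take_Suc: "take (Suc k) ?xs = take k ?xs @ [v]"
    using k by (simp add: v_def take_Suc_conv_app_nth)
  moreover have "distinct (take k ?xs @ [v])"
    unfolding take_Suc[symmetric] by (intro distinct_take) (simp add: distinct_vlist)
  ultimately show ?thesis
    unfolding INC_def fwd_state_eq_sweep edge_iff
    using sweep_snoc_value[of "take k ?xs" v "\<lambda>v. (rJ A B v, rV A B v)"] rV_pos[OF v]
    by (simp add: rJ_def)
qed

lemma bwd_state_DEC:
  assumes k: "k < length (vlist A B)"
  defines "v \<equiv> rev (vlist A B) ! k" and "DEC \<equiv> snd (bwd_state A B (Suc k))"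
  shows "DEC v = 1 + Max (insert 0 {DEC w | w. w \<in> Vset A B \<and> fst v < fst w
                                          \<and> snd v < snd w \<and> A ! fst w < A ! fst v})"
proof -
  let ?xs = "rev (vlist A B)"
  let ?hrJ = "\<lambda>v. maxJ A B - rJ A B v + 1"
  have v: "v \<in> Vset A B" using k by (metis length_rev nth_mem set_rev set_vlist v_def)
  have succ_iff: "w \<in> Vset A B \<and> fst v < fst w \<and> snd v < snd w \<and> A ! fst w < A ! fst v \<longleftrightarrow>
      w \<in> set (take k ?xs) \<and> ?hrJ w < ?hrJ v \<and> rV A B w < rV A B v" for w
  proof (cases "w \<in> Vset A B")
    case True
    have "w \<in> set (take k ?xs) \<longleftrightarrow> v < w"
      unfolding v_def using k True sorted_wrt_less_vlist
      by (intro set_take_iff_sorted_wrt) (auto simp: set_vlist sorted_wrt_rev)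
    moreover have "?hrJ w < ?hrJ v \<longleftrightarrow> rJ A B v < rJ A B w"
      using rJ_le_maxJ[OF v] rJ_le_maxJ[OF True] by linarith
    ultimately show ?thesis using True v by (auto simp: rJ_less_iff rV_less_iff less_prod_def')
  qed (auto simp: set_vlist dest: in_set_takeD)
  have take_Suc: "take (Suc k) ?xs = take k ?xs @ [v]"
    using k by (simp add: v_def take_Suc_conv_app_nth)
  moreover have "distinct (take k ?xs @ [v])"
    unfolding take_Suc[symmetric] by (intro distinct_take) (simp add: distinct_vlist)
  ultimately show ?thesis
    unfolding DEC_def bwd_state_eq_sweep succ_iff
    using sweep_snoc_value[of "take k ?xs" v "\<lambda>v. (?hrJ v, rV A B v)"] rV_pos[OF v]
    by simp
qed

theorem mainTheorem6:
  fixes A B :: "('a::linorder) list"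
  shows "(\<forall>k < length (vlist A B).
            let v = vlist A B ! k; INC = snd (fwd_state A B (Suc k))
            in INC v = 1 + Max (insert 0 {INC u | u. (u, v) \<in> Eset A B}))
       \<and> (\<forall>k < length (vlist A B).
            let v = rev (vlist A B) ! k; DEC = snd (bwd_state A B (Suc k))
            in DEC v = 1 + Max (insert 0 {DEC w | w. w \<in> Vset A B \<and> fst v < fst w
                                          \<and> snd v < snd w \<and> A ! fst w < A ! fst v}))"
  unfolding Let_def using fwd_state_INC bwd_state_DEC by blast

end
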